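(* In the setting of the context, assume the matrix representing $A$ with respect to the fixed feasible basis has constant row sum $\theta_r$ (i.e. $c_i+a_i+b_i=\theta_r$ for $0\le i\le d$), where $\theta_r$ is an eigenvalue of $A$. Let $s\in\{0,\dots,d\}$ with $s\ne r$. The following are equivalent: (i) in $\Delta$, vertex $r$ is adjacent to vertex $s$ and to no other vertex; (ii) $a^*_r\ne\theta^*_0$ and $$u_i(\theta_s)=\frac{\theta^*_i-a^*_r}{\theta^*_0-a^*_r}\qquad(0\le i\le d).$$
   Context: Let $\mathbb F$ be a field, $d\ge1$, $V$ an $\mathbb F$-vector space of dimension $d+1$, $\mathcal A=\mathrm{End}(V)$ with identity $I$. Let $E^*_0,\dots,E^*_d\in\mathcal A$ satisfy $E^*_iE^*_j=\delta_{i,j}E^*_i$, $\mathrm{rank}(E^*_i)=1$. Let $A\in\mathcal A$ satisfy $E^*_iAE^*_j=0$ if $|i-j|>1$ and $\neq0$ if $|i-j|=1$. Assume $A$ has $d+1$ distinct eigenvalues $\theta_0,\dots,\theta_d\in\mathbb F$ with primitive idempotents $E_i=\prod_{j\ne i}\frac{A-\theta_jI}{\theta_i-\theta_j}$. Let $\theta^*_i\in\mathbb F$, $A^*=\sum_i\theta^*_iE^*_i$, $a^*_i=\mathrm{tr}(E_iA^* )$. Let $\Delta$ be the graph on $\{0,\dots,d\}$ with $i\sim j$ iff $i\ne j$ and $E_iA^*E_j\ne0$. A basis $v_0,\dots,v_d$ of $V$ is feasible if $v_i\in E^*_iV$ for all $i$; fix one. Then $Av_i=b_{i-1}v_{i-1}+a_iv_i+c_{i+1}v_{i+1}$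 ($v_{-1}=v_{d+1}=0$), with $a_i=\mathrm{tr}(E^*_iA)$, nonzero $b_0,\dots,b_{d-1}$, $c_1,\dots,c_d$, and $b_d=c_0=0$. Define $u_0,\dots,u_{d+1}\in\mathbb F[\lambda]$ by $u_{-1}=0$, $u_0=1$, $\lambda u_i=c_iu_{i-1}+a_iu_i+b_iu_{i+1}$ $(0\le i\le d-1)$, $\lambda u_d=c_du_{d-1}+a_du_d+u_{d+1}/(b_0\cdots b_{d-1})$. *)

theory Defs
  imports "Jordan_Normal_Form.DL_Rank" "Jordan_Normal_Form.Char_Poly"
    "HOL-Computational_Algebra.Polynomial"
begin

definition mat_trace :: "'a::comm_ring_1 mat \<Rightarrow> 'a" where
  "mat_trace M = (\<Sum>i<dim_row M. M $$ (i, i))"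

definition prim_idem :: "nat \<Rightarrow> (nat \<Rightarrow> 'a::field) \<Rightarrow> 'a mat \<Rightarrow> nat \<Rightarrow> 'a mat" where
  "prim_idem n \<theta> A i =
     foldr (\<lambda>j M. ((1 / (\<theta> i - \<theta> j)) \<cdot>\<^sub>m (A - \<theta> j \<cdot>\<^sub>m 1\<^sub>m n)) * M)
           (filter (\<lambda>j. j \<noteq> i) [0..<n]) (1\<^sub>m n)"

definition dual_mat :: "nat \<Rightarrow> (nat \<Rightarrow> 'a::field) \<Rightarrow> (nat \<Rightarrow> 'a mat) \<Rightarrow> 'a mat" where
  "dual_mat n \<theta>s Es = foldr (\<lambda>i M. \<theta>s i \<cdot>\<^sub>m Es i + M) [0..<n] (0\<^sub>m n n)"

definition astar :: "nat \<Rightarrow> (nat \<Rightarrow> 'a::field) \<Rightarrow> 'a mat \<Rightarrow> (nat \<Rightarrow> 'a) \<Rightarrow> (nat \<Rightarrow> 'a mat) \<Rightarrow> nat \<Rightarrow> 'a" where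
  "astar n \<theta> A \<theta>s Es i = mat_trace (prim_idem n \<theta> A i * dual_mat n \<theta>s Es)"

definition delta_adj :: "nat \<Rightarrow> (nat \<Rightarrow> 'a::field) \<Rightarrow> 'a mat \<Rightarrow> (nat \<Rightarrow> 'a) \<Rightarrow> (nat \<Rightarrow> 'a mat) \<Rightarrow> nat \<Rightarrow> nat \<Rightarrow> bool" where
  "delta_adj n \<theta> A \<theta>s Es i j \<longleftrightarrow>
     i \<noteq> j \<and> prim_idem n \<theta> A i * dual_mat n \<theta>s Es * prim_idem n \<theta> A j \<noteq> 0\<^sub>m n n"

text \<open>The polynomials u_0, u_1, ... defined by u_(-1) = 0, u_0 = 1 and
  lambda u_i = c_i u_(i-1) + a_i u_i + b_i u_(i+1). (Only u_0..u_d are used;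
  u_(d+1) with its different normalisation is not needed.)\<close>
fun upol :: "(nat \<Rightarrow> 'a::field) \<Rightarrow> (nat \<Rightarrow> 'a) \<Rightarrow> (nat \<Rightarrow> 'a) \<Rightarrow> nat \<Rightarrow> 'a poly" where
  "upol a b c 0 = 1"
| "upol a b c (Suc 0) = smult (1 / b 0) [:- a 0, 1:]"
| "upol a b c (Suc (Suc i)) =
     smult (1 / b (Suc i)) ([:- a (Suc i), 1:] * upol a b c (Suc i) - smult (c (Suc i)) (upol a b c i))"

end

theory Submission
  imports Defs
begin

(* Write vectors in coordinates y with respect to the feasible basis v.
   There A acts as the tridiagonal operator (T y)_i = c_i y_(i-1) + a_i y_i + b_i y_(i+1)
   and A* as the diagonal operator y_i |-> theta*_i y_i.  The eigenvector of A for theta_k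
   has coordinates u_i(theta_k), and T is self-adjoint for the weighted form
   <y, z> = sum_i k_i y_i z_i, k_i = b_0...b_(i-1) / (c_1...c_i); so these coordinate
   sequences are orthogonal with nonzero norms.  Writing A* x_j = sum_k beta_jk x_k for the
   eigenvectors x_k, the coefficients are orthogonal projections, E_i A* E_j <> 0 iff
   beta_ji <> 0 iff beta_ij <> 0, and a*_r, the trace of the rank-one matrix E_r A*,
   is beta_rr.  The row sum condition gives u_i(theta_r) = 1, hence
   theta*_i = sum_k beta_rk u_i(theta_k), and by orthogonality beta_r is supported on
   {r, s} iff theta*_i is affine in u_i(theta_s). *)

text \<open>The vector \<open>\<Sum>\<^sub>i\<^sub>\<in>\<^sub>I y\<^sub>i w\<^sub>i\<close> of length \<open>n\<close>, defined entrywise so that no carrier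
  conditions are needed for its algebraic rules; the coordinate maps below are instances.\<close>
definition combination :: "nat \<Rightarrow> 'b set \<Rightarrow> ('b \<Rightarrow> 'a::comm_ring_1) \<Rightarrow> ('b \<Rightarrow> 'a vec) \<Rightarrow> 'a vec" where
  "combination n I y w = vec n (\<lambda>a. \<Sum>i\<in>I. y i * w i $ a)"

lemma combination_carrier[simp]: "combination n I y w \<in> carrier_vec n"
  and dim_combination[simp]: "dim_vec (combination n I y w) = n"
  by (auto simp: combination_def)

lemma index_combination[simp]: "a < n \<Longrightarrow> combination n I y w $ a = (\<Sum>i\<in>I. y i * w i $ a)"
  by (simp add: combination_def)

lemma combination_cong:
  "(\<And>i. i \<in> I \<Longrightarrow> y i = y' i) \<Longrightarrow> (\<And>i. i \<in> I \<Longrightarrow> w i = w' i) \<Longrightarrow>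
   combination n I y w = combination n I y' w'"
  unfolding combination_def by (auto intro!: sum.cong)

lemma combination_diff:
  "combination n I (\<lambda>i. y i - z i) w = combination n I y w - combination n I z w"
  by (intro eq_vecI) (simp_all add: sum_subtractf algebra_simps)

lemma combination_smult: "t \<cdot>\<^sub>v combination n I y w = combination n I (\<lambda>i. t * y i) w"
  by (intro eq_vecI) (simp_all add: sum_distrib_left mult.assoc)

lemma combination_smult_vectors:
  assumes "\<And>i. i \<in> I \<Longrightarrow> w i \<in> carrier_vec n"
  shows "combination n I y (\<lambda>i. t i \<cdot>\<^sub>v w i) = combination n I (\<lambda>i. t i * y i) w"
proof (rule eq_vecI)
  fix a assume "a < dim_vec (combination n I (\<lambda>i. t i * y i) w)"
  then have a: "a < n" by simp
  have "y i * (t i \<cdot>\<^sub>v w i) $ a = t i * y i * w i $ a" if "i \<in> I" for i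
    using assms[OF that] a by simp
  then show "combination n I y (\<lambda>i. t i \<cdot>\<^sub>v w i) $ a = combination n I (\<lambda>i. t i * y i) w $ a"
    using a by (simp cong: sum.cong)
qed simp

lemma combination_zero: "combination n I (\<lambda>i. 0) w = 0\<^sub>v n"
  by (intro eq_vecI) simp_all

lemma combination_single:
  assumes "finite I" "i \<in> I" "w i \<in> carrier_vec n" and "\<And>k. k \<in> I \<Longrightarrow> k \<noteq> i \<Longrightarrow> w k = 0\<^sub>v n"
  shows "combination n I y w = y i \<cdot>\<^sub>v w i"
proof (rule eq_vecI)
  fix a assume "a < dim_vec (y i \<cdot>\<^sub>v w i)"
  then have a: "a < n" using assms(3) by simp
  have "(\<Sum>k\<in>I. y k * w k $ a) = (\<Sum>k\<in>I. if k = i then y i * w i $ a else 0)"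
    using assms(4) a by (intro sum.cong) auto
  then show "combination n I y w $ a = (y i \<cdot>\<^sub>v w i) $ a"
    using a assms(1-3) by simp
qed (use assms(3) in simp)

lemma combination_nested:
  "combination n K g (\<lambda>k. combination n I (y k) w) = combination n I (\<lambda>i. \<Sum>k\<in>K. g k * y k i) w"
  by (intro eq_vecI) (simp_all add: sum_distrib_left sum_distrib_right sum.swap[of _ K] mult.assoc)

lemma index_mult_mat_vec_sum:
  assumes "M \<in> carrier_mat m n" "w \<in> carrier_vec n" "a < m"
  shows "(M *\<^sub>v w) $ a = (\<Sum>b<n. M $$ (a,b) * w $ b)"
  using assms by (simp add: scalar_prod_def row_def lessThan_atLeast0)

lemma mult_mat_vec_combination:
  assumes M: "M \<in> carrier_mat m n" and w: "\<And>i. i \<in> I \<Longrightarrow> w i \<in> carrier_vec n"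
  shows "M *\<^sub>v combination n I y w = combination m I y (\<lambda>i. M *\<^sub>v w i)"
proof (rule eq_vecI)
  fix a assume "a < dim_vec (combination m I y (\<lambda>i. M *\<^sub>v w i))"
  then have a: "a < m" by simp
  have "(M *\<^sub>v combination n I y w) $ a = (\<Sum>b<n. M $$ (a,b) * (\<Sum>i\<in>I. y i * w i $ b))"
    using index_mult_mat_vec_sum[OF M _ a] by simp
  also have "\<dots> = (\<Sum>i\<in>I. y i * (\<Sum>b<n. M $$ (a,b) * w i $ b))"
    by (simp add: sum_distrib_left sum.swap[of _ I] ac_simps)
  also have "\<dots> = combination m I y (\<lambda>i. M *\<^sub>v w i) $ a"
    using a w by (simp add: index_mult_mat_vec_sum[OF M _ a] del: index_mult_mat_vec)
  finally show "(M *\<^sub>v combination n I y w) $ a = combination m I y (\<lambda>i. M *\<^sub>v w i) $ a" .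
qed (use M in auto)

context vec_space
begin

text \<open>For a finite indexed family \<open>w\<close>, the library's \<open>lincomb\<close> over the set \<open>w ` I\<close> is a
  combination in our sense; this translates the basis notions of the vector space library.\<close>
lemma lincomb_combination:
  assumes inj: "inj_on w I" and W: "w ` I \<subseteq> carrier_vec n"
  shows "lincomb g (w ` I) = combination n I (\<lambda>i. g (w i)) w"
proof (rule eq_vecI)
  show "dim_vec (lincomb g (w ` I)) = dim_vec (combination n I (\<lambda>i. g (w i)) w)"
    using lincomb_closed[OF W] by auto
  fix a assume "a < dim_vec (combination n I (\<lambda>i. g (w i)) w)"
  then have a: "a < n" by simp
  have "lincomb g (w ` I) $ a = (\<Sum>x\<in>w ` I. (g x \<cdot>\<^sub>v x) $ a)"
    unfolding lincomb_def by (rule finsum_index[OF a], use W in auto)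
  also have "\<dots> = (\<Sum>i\<in>I. (g (w i) \<cdot>\<^sub>v w i) $ a)"
    by (rule sum.reindex[OF inj, unfolded comp_def])
  finally show "lincomb g (w ` I) $ a = combination n I (\<lambda>i. g (w i)) w $ a"
    using a W by (auto intro!: sum.cong)
qed

lemma basis_combination_surj:
  assumes B: "basis (w ` I)" and fin: "finite I" and inj: "inj_on w I" and z: "z \<in> carrier_vec n"
  shows "\<exists>y. z = combination n I y w"
proof -
  have W: "w ` I \<subseteq> carrier_vec n" using B unfolding basis_def by auto
  have "z \<in> span (w ` I)" using B z unfolding basis_def by auto
  then obtain g where "z = lincomb g (w ` I)"
    using finite_span[of "w ` I"] fin W by auto
  then show ?thesis using lincomb_combination[OF inj W] by blast
qed

lemma basis_combination_inj:
  assumes B: "basis (w ` I)" and fin: "finite I" and inj: "inj_on w I"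
    and z: "combination n I y w = 0\<^sub>v n" and i: "i \<in> I"
  shows "y i = 0"
proof (rule ccontr)
  assume ne: "y i \<noteq> 0"
  have W: "w ` I \<subseteq> carrier_vec n" using B unfolding basis_def by auto
  define g where "g = (\<lambda>u. y (the_inv_into I w u))"
  have "lincomb g (w ` I) = combination n I y w"
    unfolding lincomb_combination[OF inj W] g_def using inj
    by (auto intro!: combination_cong simp: the_inv_into_f_f)
  then have "lin_dep (w ` I)"
    using z ne i inj by (intro lin_dep_crit[where A="w ` I" and S="w ` I" and a=g and v="w i"])
      (auto simp: g_def the_inv_into_f_f fin)
  then show False using B unfolding basis_def by auto
qed

lemma independent_is_basis:
  assumes fin: "finite I" and inj: "inj_on w I" and W: "w ` I \<subseteq> carrier_vec n"
    and card: "card I = n"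
    and ind: "\<And>y. combination n I y w = 0\<^sub>v n \<Longrightarrow> \<forall>i\<in>I. y i = 0"
  shows "basis (w ` I)"
proof (rule dim_li_is_basis)
  show "fin_dim" "finite (w ` I)" "w ` I \<subseteq> carrier_vec n" using fin W by simp_all
  show "dim \<le> card (w ` I)" using card inj by (simp add: card_image dim_is_n)
  show "lin_indpt (w ` I)"
  proof (rule finite_lin_indpt2)
    show "finite (w ` I)" "w ` I \<subseteq> carrier_vec n" using fin W by simp_all
    fix g assume "lincomb g (w ` I) = 0\<^sub>v n"
    then show "\<forall>v\<in>w ` I. g v = 0" using ind lincomb_combination[OF inj W] by auto
  qed
qed

end

lemma smult_mat_mult_vec:
  fixes M :: "'a::field mat"
  assumes M: "M \<in> carrier_mat m n" and w: "w \<in> carrier_vec n"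
  shows "(k \<cdot>\<^sub>m M) *\<^sub>v w = k \<cdot>\<^sub>v (M *\<^sub>v w)"
proof -
  have kM: "k \<cdot>\<^sub>m M \<in> carrier_mat m n" using M by simp
  show ?thesis using M w
    by (intro eq_vecI) (auto simp: index_mult_mat_vec_sum[OF kM w] index_mult_mat_vec_sum[OF M w]
      sum_distrib_left ac_simps simp del: index_mult_mat_vec)
qed

lemma mult_unit_vec_index:
  fixes M :: "'a::field mat"
  assumes "M \<in> carrier_mat m n" "a < m" "b < n"
  shows "(M *\<^sub>v unit_vec n b) $ a = M $$ (a,b)"
proof -
  have "(M *\<^sub>v unit_vec n b) $ a = (\<Sum>c<n. M $$ (a,c) * unit_vec n b $ c)"
    using assms by (simp add: index_mult_mat_vec_sum del: index_mult_mat_vec)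
  also have "\<dots> = (\<Sum>c<n. if c = b then M $$ (a,c) else 0)"
    by (intro sum.cong) (auto simp: unit_vec_def)
  also have "\<dots> = M $$ (a,b)" using assms by simp
  finally show ?thesis .
qed

lemma mat_eq_zero_if_annihilates:
  fixes M :: "'a::field mat"
  assumes M: "M \<in> carrier_mat n n" and z: "\<And>z. z \<in> carrier_vec n \<Longrightarrow> M *\<^sub>v z = 0\<^sub>v n"
  shows "M = 0\<^sub>m n n"
proof (rule eq_matI)
  fix i j assume "i < dim_row (0\<^sub>m n n)" "j < dim_col (0\<^sub>m n n)"
  then have ij: "i < n" "j < n" by auto
  have "M $$ (i,j) = (M *\<^sub>v unit_vec n j) $ i" using mult_unit_vec_index[OF M ij] by simp
  then show "M $$ (i,j) = 0\<^sub>m n n $$ (i,j)" using z[of "unit_vec n j"] ij by simp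
qed (use M in auto)

lemma smult_nonzero_vec_eq_zero:
  fixes w :: "'a::field vec"
  assumes "w \<in> carrier_vec n" "w \<noteq> 0\<^sub>v n" "t \<cdot>\<^sub>v w = 0\<^sub>v n"
  shows "t = 0"
proof -
  obtain j where j: "j < n" "w $ j \<noteq> 0" using assms(1,2) by (metis eq_vecI index_zero_vec carrier_vecD)
  have "(t \<cdot>\<^sub>v w) $ j = t * w $ j" using j assms(1) by simp
  then show ?thesis using assms(3) j by simp
qed

lemma prim_idem_foldr:
  fixes A :: "'a::field mat" and \<theta> :: "nat \<Rightarrow> 'a" and i :: nat
  assumes A: "A \<in> carrier_mat n n" and x: "x \<in> carrier_vec n" and Ax: "A *\<^sub>v x = t \<cdot>\<^sub>v x"
  defines "P js \<equiv> foldr (\<lambda>j M. ((1 / (\<theta> i - \<theta> j)) \<cdot>\<^sub>m (A - \<theta> j \<cdot>\<^sub>m 1\<^sub>m n)) * M) js (1\<^sub>m n)"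
  shows "P js \<in> carrier_mat n n \<and> P js *\<^sub>v x = (\<Prod>j\<leftarrow>js. (t - \<theta> j) / (\<theta> i - \<theta> j)) \<cdot>\<^sub>v x"
proof (induction js)
  case Nil
  then show ?case using x by (simp add: P_def)
next
  case (Cons j js)
  define N where "N = (1 / (\<theta> i - \<theta> j)) \<cdot>\<^sub>m (A - \<theta> j \<cdot>\<^sub>m 1\<^sub>m n)"
  have P: "P js \<in> carrier_mat n n" and N: "N \<in> carrier_mat n n"
    using Cons A by (auto simp: N_def)
  have "N *\<^sub>v x = (1 / (\<theta> i - \<theta> j)) \<cdot>\<^sub>v ((A - \<theta> j \<cdot>\<^sub>m 1\<^sub>m n) *\<^sub>v x)"
    unfolding N_def using A x by (intro smult_mat_mult_vec[of _ n n]) auto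
  also have "(A - \<theta> j \<cdot>\<^sub>m 1\<^sub>m n) *\<^sub>v x = A *\<^sub>v x - \<theta> j \<cdot>\<^sub>v x"
    using A x by (simp add: minus_mult_distrib_mat_vec[of _ n n] smult_mat_mult_vec[of _ n n])
  also have "(1 / (\<theta> i - \<theta> j)) \<cdot>\<^sub>v (A *\<^sub>v x - \<theta> j \<cdot>\<^sub>v x) = ((t - \<theta> j) / (\<theta> i - \<theta> j)) \<cdot>\<^sub>v x"
    using x by (intro eq_vecI) (auto simp: Ax field_simps)
  finally have Nx: "N *\<^sub>v x = ((t - \<theta> j) / (\<theta> i - \<theta> j)) \<cdot>\<^sub>v x" .
  have "P (j # js) *\<^sub>v x = N *\<^sub>v (P js *\<^sub>v x)" using N P x by (simp add: P_def N_def)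
  also have "\<dots> = (\<Prod>j'\<leftarrow>js. (t - \<theta> j') / (\<theta> i - \<theta> j')) \<cdot>\<^sub>v (N *\<^sub>v x)"
    using Cons N x by (simp add: mult_mat_vec)
  also have "\<dots> = (\<Prod>j'\<leftarrow>j # js. (t - \<theta> j') / (\<theta> i - \<theta> j')) \<cdot>\<^sub>v x"
    unfolding Nx by (simp add: smult_smult_assoc ac_simps)
  finally show ?case using N P by (simp add: P_def N_def)
qed

lemma prim_idem_eigenvector:
  fixes A :: "'a::field mat"
  assumes A: "A \<in> carrier_mat n n" and x: "x \<in> carrier_vec n" and Ax: "A *\<^sub>v x = \<theta> k \<cdot>\<^sub>v x"
    and inj: "inj_on \<theta> {..<n}" and i: "i < n" and k: "k < n"
  shows "prim_idem n \<theta> A i *\<^sub>v x = (if i = k then x else 0\<^sub>v n)"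
    and "prim_idem n \<theta> A i \<in> carrier_mat n n"
proof -
  define js where "js = filter (\<lambda>j. j \<noteq> i) [0..<n]"
  define p where "p = (\<Prod>j\<leftarrow>js. (\<theta> k - \<theta> j) / (\<theta> i - \<theta> j))"
  note F = prim_idem_foldr[OF A x Ax, of \<theta> i js]
  show "prim_idem n \<theta> A i \<in> carrier_mat n n" using F unfolding prim_idem_def js_def by auto
  have eq: "prim_idem n \<theta> A i *\<^sub>v x = p \<cdot>\<^sub>v x"
    using F unfolding prim_idem_def js_def p_def by auto
  show "prim_idem n \<theta> A i *\<^sub>v x = (if i = k then x else 0\<^sub>v n)"
  proof (cases "i = k")
    case True
    have "p = (\<Prod>j\<in>set js. (\<theta> k - \<theta> j) / (\<theta> i - \<theta> j))"
      unfolding p_def js_def by (subst prod.distinct_set_conv_list) auto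
    also have "\<dots> = 1" using True inj i
      by (intro prod.neutral) (auto simp: inj_on_def js_def)
    finally show ?thesis using eq True x by simp
  next
    case False
    then have "0 \<in> set (map (\<lambda>j. (\<theta> k - \<theta> j) / (\<theta> i - \<theta> j)) js)"
      using k by (auto simp: js_def intro!: image_eqI[of _ _ k])
    then have "p = 0" unfolding p_def using prod_list_zero_iff by blast
    then show ?thesis unfolding eq using False x by (auto intro!: eq_vecI)
  qed
qed

lemma dual_mat_foldr:
  fixes Es :: "nat \<Rightarrow> 'a::field mat" and ts :: "nat \<Rightarrow> 'a"
    and n :: nat
  defines "S js \<equiv> foldr (\<lambda>i M. ts i \<cdot>\<^sub>m Es i + M) js (0\<^sub>m n n)"
  assumes Es: "\<And>i. i \<in> set js \<Longrightarrow> Es i \<in> carrier_mat n n" and w: "w \<in> carrier_vec n"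
    and Ew: "\<And>i. i \<in> set js \<Longrightarrow> Es i *\<^sub>v w = (if i = j then w else 0\<^sub>v n)"
  shows "S js \<in> carrier_mat n n \<and> S js *\<^sub>v w = (\<Sum>i\<leftarrow>js. if i = j then ts i else 0) \<cdot>\<^sub>v w"
  using Es Ew
proof (induction js)
  case Nil
  then show ?case using w by (auto simp: S_def intro!: eq_vecI)
next
  case (Cons i js)
  have S: "S js \<in> carrier_mat n n" and Ei: "Es i \<in> carrier_mat n n" using Cons by auto
  have "S (i # js) *\<^sub>v w = ts i \<cdot>\<^sub>v (Es i *\<^sub>v w) + S js *\<^sub>v w"
    using Ei S w by (simp add: S_def add_mult_distrib_mat_vec[of _ n n] smult_mat_mult_vec)
  then show ?case using Ei S Cons w by (auto simp: S_def distrib_right intro!: eq_vecI)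
qed

lemma dual_mat_eigenvector:
  fixes Es :: "nat \<Rightarrow> 'a::field mat"
  assumes Es: "\<And>i. i < n \<Longrightarrow> Es i \<in> carrier_mat n n" and w: "w \<in> carrier_vec n" and j: "j < n"
    and Ew: "\<And>i. i < n \<Longrightarrow> Es i *\<^sub>v w = (if i = j then w else 0\<^sub>v n)"
  shows "dual_mat n \<theta>s Es *\<^sub>v w = \<theta>s j \<cdot>\<^sub>v w" and "dual_mat n \<theta>s Es \<in> carrier_mat n n"
proof -
  note F = dual_mat_foldr[of "[0..<n]" Es n w j \<theta>s]
  have "(\<Sum>i\<leftarrow>[0..<n]. if i = j then \<theta>s i else 0) = \<theta>s j"
    using j by (simp add: interv_sum_list_conv_sum_set_nat)
  then show "dual_mat n \<theta>s Es *\<^sub>v w = \<theta>s j \<cdot>\<^sub>v w" "dual_mat n \<theta>s Es \<in> carrier_mat n n"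
    using F Es w Ew unfolding dual_mat_def by auto
qed

text \<open>This computes \<open>a\<^sup>*\<^sub>r = tr(E\<^sub>r A\<^sup>*)\<close>.\<close>
lemma trace_rank_one:
  fixes M :: "'a::field mat"
  assumes M: "M \<in> carrier_mat n n" and x: "x \<in> carrier_vec n" and x0: "x \<noteq> 0\<^sub>v n"
    and img: "\<And>z. z \<in> carrier_vec n \<Longrightarrow> \<exists>l. M *\<^sub>v z = l \<cdot>\<^sub>v x"
    and Mx: "M *\<^sub>v x = \<mu> \<cdot>\<^sub>v x"
  shows "mat_trace M = \<mu>"
proof -
  obtain h where h: "\<And>b. b < n \<Longrightarrow> M *\<^sub>v unit_vec n b = h b \<cdot>\<^sub>v x"
    using img[OF unit_vec_carrier] by metis
  have Mab: "M $$ (a,b) = h b * x $ a" if "a < n" "b < n" for a b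
    using mult_unit_vec_index[OF M that] h[OF that(2)] that x by simp
  obtain a where a: "a < n" "x $ a \<noteq> 0" using x0 x by (metis eq_vecI index_zero_vec carrier_vecD)
  have "\<mu> * x $ a = (M *\<^sub>v x) $ a" using Mx a x by simp
  also have "\<dots> = (\<Sum>b<n. M $$ (a,b) * x $ b)"
    using M x a by (simp add: index_mult_mat_vec_sum del: index_mult_mat_vec)
  also have "\<dots> = x $ a * (\<Sum>b<n. h b * x $ b)"
    using a by (simp add: Mab sum_distrib_left ac_simps)
  finally have "(\<Sum>b<n. h b * x $ b) = \<mu>" using a by (simp add: mult.commute)
  moreover have "mat_trace M = (\<Sum>b<n. h b * x $ b)"
    using M by (simp add: mat_trace_def Mab)
  ultimately show ?thesis by simp
qed

text \<open>The tridiagonal operator on coordinate sequences, \<open>(T y)\<^sub>i = c\<^sub>i y\<^sub>i\<^sub>-\<^sub>1 + a\<^sub>i y\<^sub>i + b\<^sub>i y\<^sub>i\<^sub>+\<^sub>1\<close>: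
  the action of \<open>A\<close> on coordinates in a feasible basis.\<close>
definition tridiag :: "(nat \<Rightarrow> 'a::field) \<Rightarrow> (nat \<Rightarrow> 'a) \<Rightarrow> (nat \<Rightarrow> 'a) \<Rightarrow> (nat \<Rightarrow> 'a) \<Rightarrow> nat \<Rightarrow> 'a" where
  "tridiag a b c y i = c i * y (i - 1) + a i * y i + b i * y (Suc i)"

lemma tridiag_upol:
  assumes "b i \<noteq> 0" and "c 0 = 0"
  shows "tridiag a b c (\<lambda>i. poly (upol a b c i) t) i = t * poly (upol a b c i) t"
  using assms by (cases i) (simp_all add: tridiag_def field_simps)

lemma tridiag_eigen_upol:
  fixes a b c y :: "nat \<Rightarrow> 'a::field"
  assumes b: "\<forall>i<d. b i \<noteq> 0" and c0: "c 0 = 0"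
    and ey: "\<forall>i<d. tridiag a b c y i = t * y i"
  shows "i \<le> d \<Longrightarrow> y i = y 0 * poly (upol a b c i) t"
proof (induction i rule: induct_nat_012)
  case 1
  then have "tridiag a b c y 0 = t * y 0" "b 0 \<noteq> 0" using ey b by auto
  then show ?case using c0 by (simp add: tridiag_def field_simps)
next
  case (ge2 i)
  then have "tridiag a b c y (Suc i) = t * y (Suc i)" "b (Suc i) \<noteq> 0" using ey b by auto
  then have "y (Suc (Suc i)) = ((t - a (Suc i)) * y (Suc i) - c (Suc i) * y i) / b (Suc i)"
    by (simp add: tridiag_def field_simps)
  then show ?case using ge2 by (simp add: field_simps)
qed simp

text \<open>Summation by parts: regrouping \<open>\<Sum>\<^sub>i y\<^sub>i (b\<^sub>i\<^sub>-\<^sub>1 p\<^sub>i\<^sub>-\<^sub>1 + a\<^sub>i p\<^sub>i + c\<^sub>i\<^sub>+\<^sub>1 p\<^sub>i\<^sub>+\<^sub>1)\<close>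
  by the index of \<open>p\<close> gives \<open>\<Sum>\<^sub>i (T y)\<^sub>i p\<^sub>i\<close>.\<close>
lemma tridiag_transpose_sum:
  fixes y p a b c :: "nat \<Rightarrow> 'a::field"
  assumes bd: "b d = 0" and c0: "c 0 = 0"
  shows "(\<Sum>i\<le>d. y i * ((if i = 0 then 0 else b (i-1) * p (i-1)) + a i * p i
            + (if i = d then 0 else c (i+1) * p (i+1))))
       = (\<Sum>i\<le>d. tridiag a b c y i * p i)"
proof (cases d)
  case 0
  then show ?thesis using bd c0 by (simp add: tridiag_def)
next
  case (Suc m)
  have L1: "(\<Sum>i\<le>Suc m. y i * (if i = 0 then 0 else b (i-1) * p (i-1))) = (\<Sum>i\<le>m. y (Suc i) * b i * p i)"
    by (subst sum.atMost_Suc_shift) (simp add: ac_simps)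
  have L3: "(\<Sum>i\<le>Suc m. y i * (if i = Suc m then 0 else c (i+1) * p (i+1)))
      = (\<Sum>i\<le>m. y i * c (Suc i) * p (Suc i))"
    by (subst sum.atMost_Suc) (auto simp: ac_simps intro!: sum.cong)
  have R1: "(\<Sum>i\<le>Suc m. c i * y (i-1) * p i) = (\<Sum>i\<le>m. y i * c (Suc i) * p (Suc i))"
    using c0 by (subst sum.atMost_Suc_shift) (simp add: ac_simps)
  have R3: "(\<Sum>i\<le>Suc m. b i * y (Suc i) * p i) = (\<Sum>i\<le>m. y (Suc i) * b i * p i)"
    using bd Suc by (simp add: ac_simps)
  have "(\<Sum>i\<le>d. y i * ((if i = 0 then 0 else b (i-1) * p (i-1)) + a i * p i
            + (if i = d then 0 else c (i+1) * p (i+1))))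
     = (\<Sum>i\<le>Suc m. y i * (if i = 0 then 0 else b (i-1) * p (i-1))) + (\<Sum>i\<le>Suc m. a i * y i * p i)
       + (\<Sum>i\<le>Suc m. y i * (if i = Suc m then 0 else c (i+1) * p (i+1)))"
    unfolding Suc sum.distrib[symmetric] by (intro sum.cong) (simp_all add: algebra_simps)
  moreover have "(\<Sum>i\<le>d. tridiag a b c y i * p i)
     = (\<Sum>i\<le>Suc m. c i * y (i-1) * p i) + (\<Sum>i\<le>Suc m. a i * y i * p i) + (\<Sum>i\<le>Suc m. b i * y (Suc i) * p i)"
    unfolding Suc sum.distrib[symmetric] by (intro sum.cong) (simp_all add: tridiag_def algebra_simps)
  ultimately show ?thesis using L1 L3 R1 R3 by simp
qed

text \<open>The weights \<open>k\<^sub>i = b\<^sub>0 \<cdots> b\<^sub>i\<^sub>-\<^sub>1 / (c\<^sub>1 \<cdots> c\<^sub>i)\<close> and the weighted bilinear form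
  \<open>\<langle>y, z\<rangle> = \<Sum>\<^sub>i\<^sub>\<le>\<^sub>d k\<^sub>i y\<^sub>i z\<^sub>i\<close>, for which \<open>T\<close> is self-adjoint.\<close>
fun weight :: "(nat \<Rightarrow> 'a::field) \<Rightarrow> (nat \<Rightarrow> 'a) \<Rightarrow> nat \<Rightarrow> 'a" where
  "weight b c 0 = 1"
| "weight b c (Suc i) = weight b c i * b i / c (Suc i)"

definition wform :: "(nat \<Rightarrow> 'a::field) \<Rightarrow> (nat \<Rightarrow> 'a) \<Rightarrow> nat \<Rightarrow> (nat \<Rightarrow> 'a) \<Rightarrow> (nat \<Rightarrow> 'a) \<Rightarrow> 'a" where
  "wform b c d y z = (\<Sum>i\<le>d. weight b c i * y i * z i)"

lemma wform_cong:
  "(\<And>i. i \<le> d \<Longrightarrow> y i = y' i) \<Longrightarrow> (\<And>i. i \<le> d \<Longrightarrow> z i = z' i) \<Longrightarrow> wform b c d y z = wform b c d y' z'"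
  unfolding wform_def by (intro sum.cong) auto

lemma wform_comm: "wform b c d y z = wform b c d z y"
  unfolding wform_def by (intro sum.cong) (auto simp: ac_simps)

lemma wform_smult_left: "wform b c d (\<lambda>i. t * y i) z = t * wform b c d y z"
  unfolding wform_def by (simp add: sum_distrib_left ac_simps)

lemma wform_smult_right: "wform b c d y (\<lambda>i. t * z i) = t * wform b c d y z"
  using wform_smult_left[of b c d t z y] by (simp add: wform_comm)

lemma wform_move_diagonal: "wform b c d (\<lambda>i. f i * y i) z = wform b c d y (\<lambda>i. f i * z i)"
  unfolding wform_def by (intro sum.cong) (auto simp: ac_simps)

lemma wform_add_right:
  "wform b c d y (\<lambda>i. z i + w i) = wform b c d y z + wform b c d y w"
  unfolding wform_def by (simp add: sum.distrib algebra_simps)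

lemma wform_sum_right:
  "wform b c d y (\<lambda>i. \<Sum>m\<in>M. g m * z m i) = (\<Sum>m\<in>M. g m * wform b c d y (z m))"
  unfolding wform_def by (simp add: sum_distrib_left sum.swap[of _ M] ac_simps)

text \<open>The key identity \<open>k\<^sub>i c\<^sub>i = k\<^sub>i\<^sub>-\<^sub>1 b\<^sub>i\<^sub>-\<^sub>1\<close>, summed.\<close>
lemma weighted_shift_sum:
  fixes b c f g :: "nat \<Rightarrow> 'a::field"
  assumes c: "\<forall>i. 1 \<le> i \<and> i \<le> d \<longrightarrow> c i \<noteq> 0" and c0: "c 0 = 0"
  shows "m \<le> d \<Longrightarrow> (\<Sum>i\<le>m. weight b c i * c i * f (i - 1) * g i) = (\<Sum>i<m. weight b c i * b i * f i * g (Suc i))"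
proof (induction m)
  case (Suc m)
  then have "c (Suc m) \<noteq> 0" using c by auto
  then show ?case using Suc by (simp add: field_simps)
qed (use c0 in simp)

lemma tridiag_selfadjoint:
  fixes a b c y z :: "nat \<Rightarrow> 'a::field"
  assumes c: "\<forall>i. 1 \<le> i \<and> i \<le> d \<longrightarrow> c i \<noteq> 0" and c0: "c 0 = 0" and bd: "b d = 0"
  shows "wform b c d (tridiag a b c y) z = wform b c d y (tridiag a b c z)"
proof -
  have S: "(\<Sum>i\<le>d. weight b c i * c i * f (i - 1) * g i) = (\<Sum>i\<le>d. weight b c i * b i * f i * g (Suc i))"
    for f g :: "nat \<Rightarrow> 'a"
    using weighted_shift_sum[OF c c0, of d b f g] bd by (simp add: lessThan_Suc_atMost[symmetric])
  have "wform b c d (tridiag a b c y) z = (\<Sum>i\<le>d. weight b c i * c i * y (i - 1) * z i)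
      + (\<Sum>i\<le>d. weight b c i * a i * y i * z i) + (\<Sum>i\<le>d. weight b c i * b i * y (Suc i) * z i)"
    unfolding wform_def sum.distrib[symmetric] by (intro sum.cong) (simp_all add: tridiag_def algebra_simps)
  moreover have "wform b c d y (tridiag a b c z) = (\<Sum>i\<le>d. weight b c i * c i * z (i - 1) * y i)
      + (\<Sum>i\<le>d. weight b c i * a i * y i * z i) + (\<Sum>i\<le>d. weight b c i * b i * z (Suc i) * y i)"
    unfolding wform_def sum.distrib[symmetric] by (intro sum.cong) (simp_all add: tridiag_def algebra_simps)
  ultimately show ?thesis using S[of y z] S[of z y] by (simp add: ac_simps)
qed

locale feasible_tridiagonal =
  fixes n d :: nat and A :: "'a::field mat" and Es :: "nat \<Rightarrow> 'a mat"
    and \<theta> b c :: "nat \<Rightarrow> 'a" and v :: "nat \<Rightarrow> 'a vec"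
  assumes dim: "n = d + 1"
    and A: "A \<in> carrier_mat n n"
    and Es_carrier: "\<forall>i\<le>d. Es i \<in> carrier_mat n n"
    and Es_orth: "\<forall>i\<le>d. \<forall>j\<le>d. Es i * Es j = (if i = j then Es i else 0\<^sub>m n n)"
    and eig_distinct: "inj_on \<theta> {..d}"
    and eig: "\<forall>i\<le>d. eigenvalue A (\<theta> i)"
    and v_carrier: "\<forall>i\<le>d. v i \<in> carrier_vec n"
    and v_feasible: "\<forall>i\<le>d. \<exists>w \<in> carrier_vec n. v i = Es i *\<^sub>v w"
    and v_inj: "inj_on v {..d}"
    and v_basis: "vectorspace.basis class_ring (module_vec TYPE('a) n) (v ` {..d})"
    and expansion: "\<forall>i\<le>d. A *\<^sub>v v i =
          (if i = 0 then 0\<^sub>v n else b (i - 1) \<cdot>\<^sub>v v (i - 1))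
        + mat_trace (Es i * A) \<cdot>\<^sub>v v i
        + (if i = d then 0\<^sub>v n else c (i + 1) \<cdot>\<^sub>v v (i + 1))"
    and b_nz: "\<forall>i<d. b i \<noteq> 0"
    and c_nz: "\<forall>i. 1 \<le> i \<and> i \<le> d \<longrightarrow> c i \<noteq> 0"
    and b_d: "b d = 0" and c_0: "c 0 = 0"
begin

abbreviation diag :: "nat \<Rightarrow> 'a" where
  "diag \<equiv> \<lambda>k. mat_trace (Es k * A)"

definition coords :: "(nat \<Rightarrow> 'a) \<Rightarrow> 'a vec" where
  "coords y = combination n {..d} y v"

lemma coords_carrier[simp]: "coords y \<in> carrier_vec n"
  by (simp add: coords_def)

lemma coords_surj: "z \<in> carrier_vec n \<Longrightarrow> \<exists>y. z = coords y"
proof -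
  interpret vec_space "TYPE('a)" n .
  show "z \<in> carrier_vec n \<Longrightarrow> \<exists>y. z = coords y"
    using basis_combination_surj[OF v_basis _ v_inj] by (simp add: coords_def)
qed

lemma coords_inj: "coords y = coords y' \<Longrightarrow> i \<le> d \<Longrightarrow> y i = y' i"
proof -
  interpret vec_space "TYPE('a)" n .
  assume "coords y = coords y'" "i \<le> d"
  then have "combination n {..d} (\<lambda>i. y i - y' i) v = 0\<^sub>v n"
    by (simp add: coords_def combination_diff)
  from basis_combination_inj[OF v_basis _ v_inj this] \<open>i \<le> d\<close> show "y i = y' i" by simp
qed

lemma coords_cong: "(\<And>i. i \<le> d \<Longrightarrow> y i = y' i) \<Longrightarrow> coords y = coords y'"
  unfolding coords_def by (rule combination_cong) auto

lemma coords_smult: "t \<cdot>\<^sub>v coords y = coords (\<lambda>i. t * y i)"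
  by (simp add: coords_def combination_smult)

lemma coords_zero: "coords (\<lambda>i. 0) = 0\<^sub>v n"
  by (simp add: coords_def combination_zero)

lemma A_coords: "A *\<^sub>v coords y = coords (tridiag diag b c y)"
proof (rule eq_vecI)
  fix a assume "a < dim_vec (coords (tridiag diag b c y))"
  then have a: "a < n" by (simp add: coords_def)
  have vd: "dim_vec (v i) = n" if "i \<le> d" for i using v_carrier that by auto
  have Av: "(A *\<^sub>v v i) $ a = (if i = 0 then 0 else b (i-1) * v (i-1) $ a) + diag i * v i $ a
      + (if i = d then 0 else c (i+1) * v (i+1) $ a)" if i: "i \<le> d" for i
    using expansion a i vd by auto
  have "A *\<^sub>v coords y = combination n {..d} y (\<lambda>i. A *\<^sub>v v i)"
    unfolding coords_def using A v_carrier by (intro mult_mat_vec_combination) auto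
  then have "(A *\<^sub>v coords y) $ a = (\<Sum>i\<le>d. y i * (A *\<^sub>v v i) $ a)"
    using a by simp
  also have "\<dots> = (\<Sum>i\<le>d. y i * ((if i = 0 then 0 else b (i-1) * v (i-1) $ a) + diag i * v i $ a
      + (if i = d then 0 else c (i+1) * v (i+1) $ a)))"
    by (intro sum.cong) (simp_all add: Av)
  also have "\<dots> = (\<Sum>i\<le>d. tridiag diag b c y i * v i $ a)"
    by (rule tridiag_transpose_sum[where b=b and c=c, OF b_d c_0])
  finally show "(A *\<^sub>v coords y) $ a = coords (tridiag diag b c y) $ a"
    using a by (simp add: coords_def)
qed (use A in \<open>simp add: coords_def\<close>)

lemma tridiag_eigenvector:
  assumes k: "k \<le> d"
  obtains y where "y 0 \<noteq> 0" and "\<forall>i\<le>d. tridiag diag b c y i = \<theta> k * y i"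
proof -
  obtain z where z: "z \<in> carrier_vec n" "z \<noteq> 0\<^sub>v n" "A *\<^sub>v z = \<theta> k \<cdot>\<^sub>v z"
    using eig k A unfolding eigenvalue_def eigenvector_def by auto
  obtain y where zy: "z = coords y" using coords_surj z(1) by auto
  have "coords (tridiag diag b c y) = coords (\<lambda>i. \<theta> k * y i)"
    using z(3) A_coords[of y] coords_smult[of "\<theta> k" y] unfolding zy by simp
  then have ey: "\<forall>i\<le>d. tridiag diag b c y i = \<theta> k * y i" using coords_inj by blast
  have "y 0 \<noteq> 0"
  proof
    assume "y 0 = 0"
    then have "y i = 0" if "i \<le> d" for i
      using tridiag_eigen_upol[where c=c, OF b_nz c_0, of diag y "\<theta> k" i] ey that by simp
    then have "z = coords (\<lambda>i. 0)" unfolding zy by (intro coords_cong) auto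
    then show False using z(2) coords_zero by simp
  qed
  then show thesis using ey by (rule that)
qed

text \<open>\<open>U k i = u\<^sub>i(\<theta>\<^sub>k)\<close>: the coordinates of the eigenvector of \<open>A\<close> for \<open>\<theta>\<^sub>k\<close>.\<close>
definition U :: "nat \<Rightarrow> nat \<Rightarrow> 'a" where
  "U k i = poly (upol diag b c i) (\<theta> k)"

lemma U_0[simp]: "U k 0 = 1"
  by (simp add: U_def)

text \<open>The first \<open>d\<close> rows hold by the recurrence; the last
  row, which the recurrence does not see, follows by comparison with a true eigenvector.\<close>
lemma tridiag_U:
  assumes k: "k \<le> d" and i: "i \<le> d"
  shows "tridiag diag b c (U k) i = \<theta> k * U k i"
proof (cases "i < d")
  case True
  then show ?thesis unfolding U_def by (intro tridiag_upol) (use b_nz c_0 in auto)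
next
  case False
  then have id: "i = d" using i by simp
  obtain y where y0: "y 0 \<noteq> 0" and ey: "\<forall>i\<le>d. tridiag diag b c y i = \<theta> k * y i"
    using tridiag_eigenvector[OF k] .
  have yU: "y i = y 0 * U k i" if "i \<le> d" for i
    using tridiag_eigen_upol[where c=c, OF b_nz c_0, of diag y "\<theta> k" i] ey that by (simp add: U_def)
  have "y 0 * tridiag diag b c (U k) d = tridiag diag b c y d"
    using yU[of d] yU[of "d - 1"] b_d by (simp add: tridiag_def algebra_simps)
  also have "\<dots> = y 0 * (\<theta> k * U k d)" using ey yU[of d] by simp
  finally show ?thesis using y0 id by simp
qed

text \<open>Under the constant row sum condition \<open>c\<^sub>i + a\<^sub>i + b\<^sub>i = \<theta>\<^sub>r\<close> the all-ones sequence is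
  an eigenvector of \<open>T\<close>, so \<open>u\<^sub>i(\<theta>\<^sub>r) = 1\<close>.\<close>
lemma U_row_sum:
  assumes "\<forall>i\<le>d. c i + diag i + b i = \<theta> r" and "i \<le> d"
  shows "U r i = 1"
proof -
  have "\<forall>i<d. tridiag diag b c (\<lambda>_. 1) i = \<theta> r * 1" using assms(1) by (simp add: tridiag_def)
  from tridiag_eigen_upol[where c=c, OF b_nz c_0 this] assms(2) show ?thesis by (simp add: U_def)
qed

text \<open>The eigenvectors of \<open>A\<close>, normalised by their first coordinate.\<close>
definition eigvec :: "nat \<Rightarrow> 'a vec" where
  "eigvec k = coords (U k)"

lemma eigvec_carrier[simp]: "eigvec k \<in> carrier_vec n"
  and dim_eigvec[simp]: "dim_vec (eigvec k) = n"
  by (simp_all add: eigvec_def coords_def)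

lemma A_eigvec: "k \<le> d \<Longrightarrow> A *\<^sub>v eigvec k = \<theta> k \<cdot>\<^sub>v eigvec k"
  unfolding eigvec_def A_coords coords_smult by (intro coords_cong) (simp add: tridiag_U)

lemma eigvec_nonzero: "eigvec k \<noteq> 0\<^sub>v n"
proof
  assume "eigvec k = 0\<^sub>v n"
  then have "coords (U k) = coords (\<lambda>i. 0)" by (simp add: eigvec_def coords_zero)
  from coords_inj[OF this, of 0] show False by simp
qed

abbreviation E :: "nat \<Rightarrow> 'a mat" where
  "E \<equiv> prim_idem n \<theta> A"

lemma E_carrier[simp]: "i \<le> d \<Longrightarrow> E i \<in> carrier_mat n n"
  and E_eigvec: "i \<le> d \<Longrightarrow> k \<le> d \<Longrightarrow> E i *\<^sub>v eigvec k = (if i = k then eigvec k else 0\<^sub>v n)"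
proof -
  have inj: "inj_on \<theta> {..<n}" using eig_distinct dim by (simp add: lessThan_Suc_atMost)
  have lt: "i < n" if "i \<le> d" for i using that dim by simp
  note E_eig = prim_idem_eigenvector[OF A eigvec_carrier A_eigvec inj lt lt]
  show "i \<le> d \<Longrightarrow> E i \<in> carrier_mat n n" using E_eig(2)[of 0] by simp
  show "i \<le> d \<Longrightarrow> k \<le> d \<Longrightarrow> E i *\<^sub>v eigvec k = (if i = k then eigvec k else 0\<^sub>v n)"
    using E_eig(1) by simp
qed

lemma E_combination:
  assumes i: "i \<le> d"
  shows "E i *\<^sub>v combination n {..d} \<gamma> eigvec = \<gamma> i \<cdot>\<^sub>v eigvec i"
proof -
  have "E i *\<^sub>v combination n {..d} \<gamma> eigvec = combination n {..d} \<gamma> (\<lambda>k. E i *\<^sub>v eigvec k)"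
    using i by (intro mult_mat_vec_combination) auto
  also have "\<dots> = \<gamma> i \<cdot>\<^sub>v eigvec i"
    using i by (subst combination_single[of _ i]) (auto simp: E_eigvec)
  finally show ?thesis .
qed

lemma eigvec_span:
  assumes z: "z \<in> carrier_vec n"
  shows "\<exists>\<gamma>. z = combination n {..d} \<gamma> eigvec"
proof -
  interpret vec_space "TYPE('a)" n .
  have indep: "\<gamma> k = 0" if "combination n {..d} \<gamma> eigvec = 0\<^sub>v n" "k \<le> d" for \<gamma> k
  proof -
    have "E k *\<^sub>v 0\<^sub>v n = 0\<^sub>v n"
      using E_carrier[OF that(2)] by (intro eq_vecI) (auto simp: scalar_prod_def)
    then have "\<gamma> k \<cdot>\<^sub>v eigvec k = 0\<^sub>v n"
      using E_combination[of k \<gamma>] that by simp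
    then show ?thesis using smult_nonzero_vec_eq_zero[OF _ eigvec_nonzero] by simp
  qed
  have inj: "inj_on eigvec {..d}"
  proof (rule inj_onI)
    fix j k assume jk: "j \<in> {..d}" "k \<in> {..d}" "eigvec j = eigvec k"
    then have "E j *\<^sub>v eigvec k = eigvec j" using E_eigvec[of j j] by simp
    then show "j = k" using E_eigvec[of j k] jk eigvec_nonzero[of j] by (auto split: if_splits)
  qed
  have card: "card {..d} = n" using dim by simp
  have "basis (eigvec ` {..d})"
    using indep by (intro independent_is_basis[OF _ inj _ card]) auto
  from basis_combination_surj[OF this _ inj z] show ?thesis by simp
qed

lemma U_span: "\<exists>\<gamma>. \<forall>i\<le>d. y i = (\<Sum>k\<le>d. \<gamma> k * U k i)"
proof -
  obtain \<gamma> where "coords y = combination n {..d} \<gamma> eigvec" using eigvec_span[of "coords y"] by auto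
  also have "\<dots> = coords (\<lambda>i. \<Sum>k\<le>d. \<gamma> k * U k i)"
    unfolding eigvec_def coords_def by (rule combination_nested)
  finally show ?thesis using coords_inj by blast
qed

text \<open>Eigenvectors of the self-adjoint \<open>T\<close> for distinct eigenvalues are orthogonal.\<close>
lemma U_orthogonal:
  assumes jk: "j \<le> d" "k \<le> d" "j \<noteq> k"
  shows "wform b c d (U j) (U k) = 0"
proof -
  have "\<theta> j * wform b c d (U j) (U k) = wform b c d (tridiag diag b c (U j)) (U k)"
    using jk by (simp add: wform_smult_left[symmetric] tridiag_U cong: wform_cong)
  also have "\<dots> = wform b c d (U j) (tridiag diag b c (U k))"
    by (rule tridiag_selfadjoint[where b=b and c=c and d=d, OF c_nz c_0 b_d])
  also have "\<dots> = \<theta> k * wform b c d (U j) (U k)"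
    using jk by (simp add: wform_smult_right[symmetric] tridiag_U cong: wform_cong)
  finally have "(\<theta> j - \<theta> k) * wform b c d (U j) (U k) = 0" by (simp add: algebra_simps)
  moreover have "\<theta> j \<noteq> \<theta> k" using eig_distinct jk by (auto simp: inj_on_def)
  ultimately show ?thesis by simp
qed

definition unorm :: "nat \<Rightarrow> 'a" where
  "unorm k = wform b c d (U k) (U k)"

lemma wform_U_expansion:
  assumes "k \<le> d"
  shows "wform b c d (U k) (\<lambda>i. \<Sum>m\<le>d. g m * U m i) = g k * unorm k"
proof -
  have "wform b c d (U k) (\<lambda>i. \<Sum>m\<le>d. g m * U m i) = (\<Sum>m\<le>d. g m * wform b c d (U k) (U m))"
    by (rule wform_sum_right)
  also have "\<dots> = (\<Sum>m\<le>d. if m = k then g k * unorm k else 0)"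
    using assms U_orthogonal by (intro sum.cong) (auto simp: unorm_def)
  finally show ?thesis using assms by simp
qed

text \<open>The form is nondegenerate on the \<open>U k\<close>: pairing \<open>U k\<close> with the first unit sequence
  gives \<open>1\<close>, but would give a multiple of \<open>\<langle>U k, U k\<rangle>\<close>.\<close>
lemma unorm_nonzero:
  assumes k: "k \<le> d"
  shows "unorm k \<noteq> 0"
proof
  assume "unorm k = 0"
  obtain \<gamma> where g: "\<forall>i\<le>d. (if i = 0 then 1 else 0) = (\<Sum>m\<le>d. \<gamma> m * U m i)"
    using U_span[of "\<lambda>i. if i = 0 then 1 else 0"] by blast
  have "1 = wform b c d (U k) (\<lambda>i. if i = 0 then 1 else 0)"
    by (simp add: wform_def if_distrib cong: if_cong)
  also have "\<dots> = wform b c d (U k) (\<lambda>i. \<Sum>m\<le>d. \<gamma> m * U m i)"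
    using g by (intro wform_cong) auto
  also have "\<dots> = 0" using wform_U_expansion[OF k] \<open>unorm k = 0\<close> by simp
  finally show False by simp
qed

lemma U_orthogonal_expansion:
  assumes "i \<le> d"
  shows "y i = (\<Sum>k\<le>d. wform b c d y (U k) / unorm k * U k i)"
proof -
  obtain \<gamma> where g: "\<forall>i\<le>d. y i = (\<Sum>k\<le>d. \<gamma> k * U k i)" using U_span by blast
  have "wform b c d y (U k) = \<gamma> k * unorm k" if "k \<le> d" for k
    using wform_U_expansion[OF that, of \<gamma>] g by (simp add: wform_comm cong: wform_cong)
  then show ?thesis using g assms unorm_nonzero by (auto intro!: sum.cong)
qed

lemma Es_v:
  assumes ij: "i \<le> d" "j \<le> d"
  shows "Es i *\<^sub>v v j = (if i = j then v j else 0\<^sub>v n)"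
proof -
  obtain w where w: "w \<in> carrier_vec n" "v j = Es j *\<^sub>v w" using v_feasible ij by auto
  have "Es i *\<^sub>v v j = (Es i * Es j) *\<^sub>v w"
    unfolding w(2) using w(1) Es_carrier ij by (simp add: assoc_mult_mat_vec[of _ n n _ n])
  moreover have "0\<^sub>m n n *\<^sub>v w = 0\<^sub>v n" using w(1) by (intro eq_vecI) (auto simp: scalar_prod_def)
  ultimately show ?thesis using Es_orth ij w by auto
qed

lemma dual_mat_carrier[simp]: "dual_mat n \<theta>s Es \<in> carrier_mat n n"
  and dual_mat_v: "j \<le> d \<Longrightarrow> dual_mat n \<theta>s Es *\<^sub>v v j = \<theta>s j \<cdot>\<^sub>v v j"
proof -
  have lt: "i < n \<longleftrightarrow> i \<le> d" for i using dim by auto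
  note F = dual_mat_eigenvector[of n Es "v j" j \<theta>s for j]
  show "dual_mat n \<theta>s Es \<in> carrier_mat n n" using F(2)[of 0] Es_carrier v_carrier Es_v lt by auto
  show "j \<le> d \<Longrightarrow> dual_mat n \<theta>s Es *\<^sub>v v j = \<theta>s j \<cdot>\<^sub>v v j"
    using F(1)[of j] Es_carrier v_carrier Es_v lt by auto
qed

lemma dual_mat_coords: "dual_mat n \<theta>s Es *\<^sub>v coords y = coords (\<lambda>i. \<theta>s i * y i)"
proof -
  have "dual_mat n \<theta>s Es *\<^sub>v coords y = combination n {..d} y (\<lambda>i. dual_mat n \<theta>s Es *\<^sub>v v i)"
    unfolding coords_def using v_carrier by (intro mult_mat_vec_combination) auto
  also have "\<dots> = combination n {..d} y (\<lambda>i. \<theta>s i \<cdot>\<^sub>v v i)"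
    by (intro combination_cong) (auto simp: dual_mat_v)
  also have "\<dots> = coords (\<lambda>i. \<theta>s i * y i)"
    unfolding coords_def using v_carrier by (intro combination_smult_vectors) auto
  finally show ?thesis .
qed

text \<open>\<open>dual_coeff \<theta>s j k\<close> is the coefficient of \<open>eigvec k\<close> in \<open>A\<^sup>* (eigvec j)\<close>, given by
  orthogonal projection of \<open>\<theta>\<^sup>* U j\<close> onto \<open>U k\<close>.\<close>
definition dual_coeff :: "(nat \<Rightarrow> 'a) \<Rightarrow> nat \<Rightarrow> nat \<Rightarrow> 'a" where
  "dual_coeff \<theta>s j k = wform b c d (\<lambda>i. \<theta>s i * U j i) (U k) / unorm k"

lemma dual_coeff_expansion:
  "i \<le> d \<Longrightarrow> \<theta>s i * U j i = (\<Sum>k\<le>d. dual_coeff \<theta>s j k * U k i)"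
  unfolding dual_coeff_def by (rule U_orthogonal_expansion)

lemma dual_mat_eigvec: "dual_mat n \<theta>s Es *\<^sub>v eigvec j = combination n {..d} (dual_coeff \<theta>s j) eigvec"
proof -
  have "dual_mat n \<theta>s Es *\<^sub>v eigvec j = coords (\<lambda>i. \<Sum>k\<le>d. dual_coeff \<theta>s j k * U k i)"
    unfolding eigvec_def dual_mat_coords by (intro coords_cong) (rule dual_coeff_expansion)
  also have "\<dots> = combination n {..d} (dual_coeff \<theta>s j) eigvec"
    unfolding eigvec_def coords_def by (rule combination_nested[symmetric])
  finally show ?thesis .
qed

text \<open>\<open>A\<^sup>*\<close> is diagonal, hence self-adjoint for the weighted form; so \<open>eigvec k\<close> occurs in
  \<open>A\<^sup>* (eigvec j)\<close> iff \<open>eigvec j\<close> occurs in \<open>A\<^sup>* (eigvec k)\<close>.\<close>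
lemma dual_coeff_symmetric:
  assumes "j \<le> d" "k \<le> d"
  shows "dual_coeff \<theta>s j k * unorm k = dual_coeff \<theta>s k j * unorm j"
proof -
  have "dual_coeff \<theta>s j k * unorm k = wform b c d (\<lambda>i. \<theta>s i * U j i) (U k)"
    using unorm_nonzero assms by (simp add: dual_coeff_def)
  also have "\<dots> = wform b c d (\<lambda>i. \<theta>s i * U k i) (U j)"
    by (subst wform_move_diagonal) (rule wform_comm)
  also have "\<dots> = dual_coeff \<theta>s k j * unorm j"
    using unorm_nonzero assms by (simp add: dual_coeff_def)
  finally show ?thesis .
qed

lemma E_dual_E_combination:
  assumes i: "i \<le> d" and j: "j \<le> d"
  shows "(E i * dual_mat n \<theta>s Es * E j) *\<^sub>v combination n {..d} \<gamma> eigvec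
       = (\<gamma> j * dual_coeff \<theta>s j i) \<cdot>\<^sub>v eigvec i"
proof -
  have ED: "E i * dual_mat n \<theta>s Es \<in> carrier_mat n n" using i by (meson E_carrier dual_mat_carrier mult_carrier_mat)
  have "(E i * dual_mat n \<theta>s Es * E j) *\<^sub>v combination n {..d} \<gamma> eigvec
      = E i *\<^sub>v (dual_mat n \<theta>s Es *\<^sub>v (\<gamma> j \<cdot>\<^sub>v eigvec j))"
    using i j
    by (simp add: assoc_mult_mat_vec[OF ED E_carrier] E_combination
        assoc_mult_mat_vec[OF E_carrier[OF i] dual_mat_carrier])
  also have "\<dots> = \<gamma> j \<cdot>\<^sub>v (E i *\<^sub>v combination n {..d} (dual_coeff \<theta>s j) eigvec)"
    using i by (simp add: mult_mat_vec[of _ n n] dual_mat_eigvec)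
  also have "\<dots> = (\<gamma> j * dual_coeff \<theta>s j i) \<cdot>\<^sub>v eigvec i"
    using i by (simp add: E_combination smult_smult_assoc)
  finally show ?thesis .
qed

lemma delta_adj_dual_coeff:
  assumes i: "i \<le> d" and j: "j \<le> d"
  shows "delta_adj n \<theta> A \<theta>s Es i j \<longleftrightarrow> i \<noteq> j \<and> dual_coeff \<theta>s j i \<noteq> 0"
proof -
  define M where "M = E i * dual_mat n \<theta>s Es * E j"
  have M: "M \<in> carrier_mat n n" using i j unfolding M_def by (meson E_carrier dual_mat_carrier mult_carrier_mat)
  have "M = 0\<^sub>m n n \<longleftrightarrow> dual_coeff \<theta>s j i = 0"
  proof
    assume M0: "M = 0\<^sub>m n n"
    have "dual_coeff \<theta>s j i \<cdot>\<^sub>v eigvec i = M *\<^sub>v combination n {..d} (\<lambda>k. if k = j then 1 else 0) eigvec"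
      unfolding M_def using E_dual_E_combination[OF i j] by simp
    also have "\<dots> = 0\<^sub>v n" unfolding M0 by (intro eq_vecI) (auto simp: scalar_prod_def)
    finally show "dual_coeff \<theta>s j i = 0" using smult_nonzero_vec_eq_zero[OF _ eigvec_nonzero] by simp
  next
    assume "dual_coeff \<theta>s j i = 0"
    have "M *\<^sub>v z = 0\<^sub>v n" if z: "z \<in> carrier_vec n" for z
    proof -
      obtain \<gamma> where "z = combination n {..d} \<gamma> eigvec" using eigvec_span[OF z] by blast
      then have "M *\<^sub>v z = 0 \<cdot>\<^sub>v eigvec i"
        using E_dual_E_combination[OF i j] \<open>dual_coeff \<theta>s j i = 0\<close> by (simp add: M_def)
      also have "\<dots> = 0\<^sub>v n" by (intro eq_vecI) auto
      finally show ?thesis .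
    qed
    then show "M = 0\<^sub>m n n" by (rule mat_eq_zero_if_annihilates[OF M])
  qed
  then show ?thesis unfolding delta_adj_def M_def by simp
qed

text \<open>\<open>a\<^sup>*\<^sub>r = tr(E\<^sub>r A\<^sup>*)\<close> is the diagonal coefficient, since \<open>E\<^sub>r A\<^sup>*\<close> has rank one.\<close>
lemma astar_dual_coeff:
  assumes r: "r \<le> d"
  shows "astar n \<theta> A \<theta>s Es r = dual_coeff \<theta>s r r"
  unfolding astar_def
proof (rule trace_rank_one[OF _ eigvec_carrier eigvec_nonzero])
  show "E r * dual_mat n \<theta>s Es \<in> carrier_mat n n" using r by (meson E_carrier dual_mat_carrier mult_carrier_mat)
  fix z :: "'a vec" assume z: "z \<in> carrier_vec n"
  obtain \<gamma> where "dual_mat n \<theta>s Es *\<^sub>v z = combination n {..d} \<gamma> eigvec"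
    using eigvec_span[OF mult_mat_vec_carrier[OF dual_mat_carrier z]] by blast
  then show "\<exists>l. (E r * dual_mat n \<theta>s Es) *\<^sub>v z = l \<cdot>\<^sub>v eigvec r"
    using r z by (auto simp: E_combination assoc_mult_mat_vec[of _ n n _ n])
next
  show "(E r * dual_mat n \<theta>s Es) *\<^sub>v eigvec r = dual_coeff \<theta>s r r \<cdot>\<^sub>v eigvec r"
    using r by (simp add: E_combination assoc_mult_mat_vec[of _ n n _ n] dual_mat_eigvec)
qed

text \<open>The core of the argument, for the coefficients \<open>\<beta>\<^sub>k\<close> of \<open>A\<^sup>* (eigvec r)\<close>: when
  \<open>u\<^sub>i(\<theta>\<^sub>r) = 1\<close> we have \<open>\<theta>\<^sup>*\<^sub>i = \<Sum>\<^sub>k \<beta>\<^sub>k u\<^sub>i(\<theta>\<^sub>k)\<close>, so by orthogonality \<open>\<beta>\<close> is supported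
  on \<open>{r, s}\<close> exactly when \<open>\<theta>\<^sup>*\<^sub>i\<close> is an affine function of \<open>u\<^sub>i(\<theta>\<^sub>s)\<close>.\<close>
lemma dual_coeff_support_iff:
  assumes r: "r \<le> d" and Ur: "\<forall>i\<le>d. U r i = 1" and s: "s \<le> d" "s \<noteq> r"
  shows "(\<forall>j\<le>d. (r \<noteq> j \<and> dual_coeff \<theta>s r j \<noteq> 0) \<longleftrightarrow> j = s) \<longleftrightarrow>
    (dual_coeff \<theta>s r r \<noteq> \<theta>s 0 \<and>
     (\<forall>i\<le>d. U s i = (\<theta>s i - dual_coeff \<theta>s r r) / (\<theta>s 0 - dual_coeff \<theta>s r r)))"
    (is "?support \<longleftrightarrow> ?affine")
proof
  define \<beta> where "\<beta> = dual_coeff \<theta>s r"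
  assume ?support
  then have \<beta>s: "\<beta> s \<noteq> 0" and \<beta>0: "\<And>j. j \<le> d \<Longrightarrow> j \<noteq> r \<Longrightarrow> j \<noteq> s \<Longrightarrow> \<beta> j = 0"
    using s by (auto simp: \<beta>_def)
  have lin: "\<theta>s i = \<beta> r + \<beta> s * U s i" if i: "i \<le> d" for i
  proof -
    have "\<theta>s i = (\<Sum>k\<le>d. \<beta> k * U k i)" using dual_coeff_expansion[OF i, of \<theta>s r] Ur i by (simp add: \<beta>_def)
    also have "\<dots> = (\<Sum>k\<in>{r,s}. \<beta> k * U k i)" using \<beta>0 r s by (intro sum.mono_neutral_right) auto
    finally show ?thesis using s Ur i by simp
  qed
  then have "\<theta>s 0 - \<beta> r = \<beta> s" by simp
  then show ?affine using \<beta>s lin unfolding \<beta>_def[symmetric] by (auto simp: field_simps)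
next
  define a0 where "a0 = dual_coeff \<theta>s r r"
  assume ?affine
  then have ne: "\<theta>s 0 - a0 \<noteq> 0" and Us: "\<And>i. i \<le> d \<Longrightarrow> U s i = (\<theta>s i - a0) / (\<theta>s 0 - a0)"
    by (auto simp: a0_def)
  have coeff: "dual_coeff \<theta>s r j * unorm j
      = a0 * wform b c d (U j) (U r) + (\<theta>s 0 - a0) * wform b c d (U j) (U s)" if j: "j \<le> d" for j
  proof -
    have "dual_coeff \<theta>s r j * unorm j = wform b c d (U j) (\<lambda>i. \<theta>s i * U r i)"
      using unorm_nonzero[OF j] by (simp add: dual_coeff_def wform_comm)
    also have "\<dots> = wform b c d (U j) (\<lambda>i. a0 * U r i + (\<theta>s 0 - a0) * U s i)"
      using Us Ur ne by (intro wform_cong) auto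
    finally show ?thesis by (simp add: wform_add_right wform_smult_right)
  qed
  show ?support
  proof (intro allI impI)
    fix j assume j: "j \<le> d"
    show "(r \<noteq> j \<and> dual_coeff \<theta>s r j \<noteq> 0) \<longleftrightarrow> j = s"
    proof (cases "j = s")
      case True
      then have "dual_coeff \<theta>s r j * unorm j = (\<theta>s 0 - a0) * unorm s"
        using coeff[OF j] U_orthogonal[OF s(1) r s(2)] by (simp add: unorm_def)
      then show ?thesis using True s ne unorm_nonzero[OF s(1)] by auto
    next
      case False
      then have "j = r \<or> dual_coeff \<theta>s r j = 0"
        using coeff[OF j] U_orthogonal[OF j r] U_orthogonal[OF j s(1)] unorm_nonzero[OF j]
        by (cases "j = r") auto
      then show ?thesis using False by auto
    qed
  qed
qed

theorem unique_neighbour_iff: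
  assumes r: "r \<le> d" and Ur: "\<forall>i\<le>d. U r i = 1" and s: "s \<le> d" "s \<noteq> r"
  shows "(\<forall>j\<le>d. delta_adj n \<theta> A \<theta>s Es r j \<longleftrightarrow> j = s) \<longleftrightarrow>
    (astar n \<theta> A \<theta>s Es r \<noteq> \<theta>s 0 \<and>
     (\<forall>i\<le>d. U s i = (\<theta>s i - astar n \<theta> A \<theta>s Es r) / (\<theta>s 0 - astar n \<theta> A \<theta>s Es r)))"
proof -
  have "delta_adj n \<theta> A \<theta>s Es r j \<longleftrightarrow> r \<noteq> j \<and> dual_coeff \<theta>s r j \<noteq> 0" if j: "j \<le> d" for j
    using delta_adj_dual_coeff[OF r j, of \<theta>s] dual_coeff_symmetric[OF j r, of \<theta>s]
      unorm_nonzero[OF r] unorm_nonzero[OF j] by auto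
  then show ?thesis
    using dual_coeff_support_iff[OF r Ur s] astar_dual_coeff[OF r] by simp
qed

end

text \<open>Proposition 8.3: the hypotheses of the setting hold, and the row sum condition gives
  \<open>u\<^sub>i(\<theta>\<^sub>r) = 1\<close>.\<close>
theorem proposition8p3:
  fixes d r s :: nat
    and Es :: "nat \<Rightarrow> 'a::field mat" and A :: "'a mat"
    and \<theta> \<theta>s b c :: "nat \<Rightarrow> 'a"
    and v :: "nat \<Rightarrow> 'a vec"
  assumes d: "d \<ge> 1"
    and A: "A \<in> carrier_mat (d+1) (d+1)"
    and Es_carrier: "\<forall>i\<le>d. Es i \<in> carrier_mat (d+1) (d+1)"
    and Es_orth: "\<forall>i\<le>d. \<forall>j\<le>d. Es i * Es j = (if i = j then Es i else 0\<^sub>m (d+1) (d+1))"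
    and Es_rank: "\<forall>i\<le>d. vec_space.rank (d+1) (Es i) = 1"
    and tridiag0: "\<forall>i\<le>d. \<forall>j\<le>d. (j + 1 < i \<or> i + 1 < j) \<longrightarrow> Es i * A * Es j = 0\<^sub>m (d+1) (d+1)"
    and tridiag1: "\<forall>i\<le>d. \<forall>j\<le>d. (i = j + 1 \<or> j = i + 1) \<longrightarrow> Es i * A * Es j \<noteq> 0\<^sub>m (d+1) (d+1)"
    and eig_distinct: "inj_on \<theta> {..d}"
    and eig: "\<forall>i\<le>d. eigenvalue A (\<theta> i)"
    and v_carrier: "\<forall>i\<le>d. v i \<in> carrier_vec (d+1)"
    and v_feasible: "\<forall>i\<le>d. \<exists>w \<in> carrier_vec (d+1). v i = Es i *\<^sub>v w"
    and v_inj: "inj_on v {..d}"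
    and v_basis: "vectorspace.basis class_ring (module_vec TYPE('a) (d+1)) (v ` {..d})"
    and expansion: "\<forall>i\<le>d. A *\<^sub>v v i =
          (if i = 0 then 0\<^sub>v (d+1) else b (i - 1) \<cdot>\<^sub>v v (i - 1))
        + mat_trace (Es i * A) \<cdot>\<^sub>v v i
        + (if i = d then 0\<^sub>v (d+1) else c (i + 1) \<cdot>\<^sub>v v (i + 1))"
    and b_nz: "\<forall>i<d. b i \<noteq> 0"
    and c_nz: "\<forall>i. 1 \<le> i \<and> i \<le> d \<longrightarrow> c i \<noteq> 0"
    and b_d: "b d = 0" and c_0: "c 0 = 0"
    and r: "r \<le> d"
    and row_sum: "\<forall>i\<le>d. c i + mat_trace (Es i * A) + b i = \<theta> r"
    and s: "s \<le> d" "s \<noteq> r"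
  shows "(\<forall>j\<le>d. delta_adj (d+1) \<theta> A \<theta>s Es r j \<longleftrightarrow> j = s) \<longleftrightarrow>
         (astar (d+1) \<theta> A \<theta>s Es r \<noteq> \<theta>s 0 \<and>
          (\<forall>i\<le>d. poly (upol (\<lambda>k. mat_trace (Es k * A)) b c i) (\<theta> s) =
                   (\<theta>s i - astar (d+1) \<theta> A \<theta>s Es r) / (\<theta>s 0 - astar (d+1) \<theta> A \<theta>s Es r)))"
proof -
  interpret feasible_tridiagonal "d+1" d A Es \<theta> b c v
    by (rule feasible_tridiagonal.intro) (rule refl | fact)+
  have Ur: "\<forall>i\<le>d. U r i = 1" using U_row_sum[OF row_sum] by blast
  show ?thesis using unique_neighbour_iff[OF r Ur s] by (simp add: U_def)
qed

end
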